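(* Let $P$ and $Q$ be distinct planes in $\mathbb{H}^4$ intersecting in a single point. Then $H_PH_Q$ is a type-II orientation preserving elliptic isometry.
   Context: A plane is a $2$-dimensional totally geodesic subspace of $\mathbb{H}^4$. For a plane $P$, the half-turn $H_P$ is the composition of reflections in two orthogonal hyperplanes intersecting in $P$. An elliptic isometry of $\mathbb{H}^4$ is of type II if it fixes a unique point of $\mathbb{H}^4$. *)

theory Defs
  imports "HOL-Analysis.Analysis"
begin

text \<open>Hyperboloid model of hyperbolic 4-space inside Minkowski space R^{4,1}.
  Coordinate 0 of real^5 is the time coordinate.\<close>

definition mink :: "real^5 \<Rightarrow> real^5 \<Rightarrow> real" where
  "mink x y = (\<Sum>i\<in>UNIV. x $ i * y $ i) - 2 * (x $ 0) * (y $ 0)"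

definition H4 :: "(real^5) set" where
  "H4 = {x. mink x x = -1 \<and> x $ 0 > 0}"

definition hyp_isometry :: "real^5^5 \<Rightarrow> bool" where
  "hyp_isometry M \<longleftrightarrow> (\<forall>x y. mink (M *v x) (M *v y) = mink x y) \<and> (\<lambda>x. M *v x) ` H4 = H4"

definition orientation_preserving :: "real^5^5 \<Rightarrow> bool" where
  "orientation_preserving M \<longleftrightarrow> hyp_isometry M \<and> det M = 1"

definition elliptic :: "real^5^5 \<Rightarrow> bool" where
  "elliptic M \<longleftrightarrow> hyp_isometry M \<and> (\<exists>x\<in>H4. M *v x = x)"

definition elliptic_type_II :: "real^5^5 \<Rightarrow> bool" where
  "elliptic_type_II M \<longleftrightarrow> elliptic M \<and> (\<exists>!x. x \<in> H4 \<and> M *v x = x)"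

text \<open>A plane (2-dim totally geodesic subspace) is the nonempty intersection of H^4 with a
  3-dimensional linear subspace.\<close>
definition hyp_plane :: "(real^5) set \<Rightarrow> bool" where
  "hyp_plane P \<longleftrightarrow> (\<exists>V. subspace V \<and> dim V = 3 \<and> P = V \<inter> H4 \<and> P \<noteq> {})"

definition hyperplane_of :: "real^5 \<Rightarrow> (real^5) set" where
  "hyperplane_of n = {x\<in>H4. mink x n = 0}"

definition reflection_mat :: "real^5 \<Rightarrow> real^5^5" where
  "reflection_mat n = (\<chi> i j. (if i = j then 1 else 0) - 2 * n $ i * mink (axis j 1) n / mink n n)"

definition is_half_turn :: "(real^5) set \<Rightarrow> real^5^5 \<Rightarrow> bool" where
  "is_half_turn P A \<longleftrightarrow> (\<exists>n1 n2. mink n1 n1 > 0 \<and> mink n2 n2 > 0 \<and> mink n1 n2 = 0 \<and>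
      P = hyperplane_of n1 \<inter> hyperplane_of n2 \<and> A = reflection_mat n1 ** reflection_mat n2)"


end

theory Submission
  imports Defs
begin

text \<open>A half-turn is an involutive orientation preserving isometry whose fixed set in
  Minkowski space is the 3-dimensional subspace \<open>V\<close> cutting out its plane. Hence
  \<open>H\<^sub>P H\<^sub>Q\<close> is an orientation preserving isometry fixing the point \<open>p\<close> of \<open>P \<inter> Q\<close>.
  Conversely, if \<open>H\<^sub>P H\<^sub>Q x = x\<close> then \<open>H\<^sub>P x = H\<^sub>Q x\<close>, so the common displacement
  \<open>x - H\<^sub>P x\<close> is Minkowski-orthogonal to both \<open>V\<^sub>P\<close> and \<open>V\<^sub>Q\<close>. Since \<open>P \<inter> Q\<close> is a single
  point, \<open>V\<^sub>P \<inter> V\<^sub>Q\<close> is the line through \<open>p\<close>, so \<open>V\<^sub>P + V\<^sub>Q\<close> is all of \<open>\<real>\<^sup>5\<close>; by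
  nondegeneracy the displacement vanishes and \<open>x\<close> lies in \<open>P \<inter> Q\<close>.\<close>

section \<open>The Minkowski form\<close>

lemma mink_inner: "mink x y = inner x y - 2 * x$0 * y$0"
  by (simp add: mink_def inner_vec_def)

lemma mink_sym: "mink x y = mink y x"
  by (simp add: mink_inner inner_commute)

lemma mink_add_left: "mink (x + y) z = mink x z + mink y z"
  by (simp add: mink_inner inner_add_left algebra_simps)

lemma mink_add_right: "mink z (x + y) = mink z x + mink z y"
  by (simp add: mink_inner inner_add_right algebra_simps)

lemma mink_diff_left: "mink (x - y) z = mink x z - mink y z"
  by (simp add: mink_inner inner_diff_left algebra_simps)

lemma mink_diff_right: "mink z (x - y) = mink z x - mink z y"
  by (simp add: mink_inner inner_diff_right algebra_simps)

lemma mink_scaleR_left: "mink (c *\<^sub>R x) z = c * mink x z"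
  by (simp add: mink_inner algebra_simps)

lemma mink_scaleR_right: "mink z (c *\<^sub>R x) = c * mink z x"
  by (simp add: mink_inner algebra_simps)

lemma mink_minus_left: "mink (- x) z = - mink x z"
  by (simp add: mink_inner algebra_simps)

lemma mink_minus_right: "mink z (- x) = - mink z x"
  by (simp add: mink_inner algebra_simps)

lemma mink_zero_left: "mink 0 z = 0"
  by (simp add: mink_inner)

lemmas mink_simps = mink_add_left mink_add_right mink_diff_left mink_diff_right
  mink_scaleR_left mink_scaleR_right mink_minus_left mink_minus_right mink_zero_left

lemma mink_axis: "mink (axis j 1) n = (if j = 0 then - n$j else n$j)"
  by (simp add: mink_inner inner_axis', simp add: axis_def)

lemma mink_nondegenerate:
  assumes "\<And>y. mink z y = 0"
  shows "z = 0"
proof (subst vec_eq_iff, intro allI)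
  fix i
  have "mink z (axis i 1) = 0" by (rule assms)
  then show "z $ i = 0 $ i" by (simp add: mink_sym[of z] mink_axis split: if_splits)
qed

definition time_flip :: "real^5 \<Rightarrow> real^5" where
  "time_flip v = (\<chi> i. if i = 0 then - v$i else v$i)"

lemma mink_eq_inner_time_flip: "mink x v = inner (time_flip v) x"
proof -
  have "inner (time_flip v) x = (\<Sum>i\<in>UNIV. x$i * v$i - (if i = 0 then 2 * x$0 * v$0 else 0))"
    unfolding inner_vec_def by (rule sum.cong) (auto simp: time_flip_def)
  also have "\<dots> = mink x v" by (simp add: sum_subtractf mink_def)
  finally show ?thesis by simp
qed

section \<open>Reflections\<close>

lemma reflection_mat_apply:
  "reflection_mat n *v x = x - (2 * mink x n / mink n n) *\<^sub>R n"
proof -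
  have mink_as_sum: "(\<Sum>j\<in>UNIV. mink (axis j 1) n * x$j) = mink x n"
  proof -
    have "(\<Sum>j\<in>UNIV. mink (axis j 1) n * x$j)
        = (\<Sum>j\<in>UNIV. x$j * n$j - (if j = 0 then 2 * x$0 * n$0 else 0))"
      by (rule sum.cong) (auto simp: mink_axis)
    then show ?thesis by (simp add: sum_subtractf mink_def)
  qed
  show ?thesis
  proof (subst vec_eq_iff, intro allI)
    fix i
    have "(reflection_mat n *v x) $ i
        = (\<Sum>j\<in>UNIV. (if i = j then x$j else 0) - (2 * n$i / mink n n) * (mink (axis j 1) n * x$j))"
      unfolding reflection_mat_def matrix_vector_mult_def
      by (simp, rule sum.cong) (auto simp: algebra_simps)
    also have "\<dots> = x$i - (2 * n$i / mink n n) * mink x n"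
      by (simp add: sum_subtractf mink_as_sum flip: sum_distrib_left sum_divide_distrib)
    finally show "(reflection_mat n *v x) $ i = (x - (2 * mink x n / mink n n) *\<^sub>R n) $ i"
      by simp
  qed
qed

lemma reflection_mat_mink:
  assumes "mink n n \<noteq> 0"
  shows "mink (reflection_mat n *v x) (reflection_mat n *v y) = mink x y"
  using assms
  by (simp add: reflection_mat_apply mink_simps mink_sym[of n x] mink_sym[of n y] field_simps)

lemma reflection_mat_involutive:
  assumes "mink n n \<noteq> 0"
  shows "reflection_mat n *v (reflection_mat n *v x) = x"
proof -
  define k where "k = 2 * mink x n / mink n n"
  have "mink (x - k *\<^sub>R n) n = - mink x n"
    using assms by (simp add: k_def mink_simps field_simps)
  then show ?thesis
    by (simp add: reflection_mat_apply flip: k_def)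
qed

lemma reflection_mat_square:
  assumes "mink n n \<noteq> 0"
  shows "reflection_mat n ** reflection_mat n = mat 1"
  using reflection_mat_involutive[OF assms]
  by (simp add: matrix_eq matrix_vector_mul_assoc[symmetric])

lemma reflection_mat_scaleR:
  assumes "c \<noteq> 0"
  shows "reflection_mat (c *\<^sub>R n) = reflection_mat n"
  using assms by (simp add: matrix_eq reflection_mat_apply mink_simps field_simps)

lemma reflection_mat_conj:
  assumes c: "mink c c \<noteq> 0"
  shows "reflection_mat c ** reflection_mat a ** reflection_mat c
       = reflection_mat (reflection_mat c *v a)"
proof -
  let ?R = "reflection_mat c" and ?b = "reflection_mat c *v a"
  have bb: "mink ?b ?b = mink a a" using reflection_mat_mink[OF c] .
  have adjoint: "mink (?R *v x) a = mink x ?b" for x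
    using reflection_mat_mink[OF c, of x ?b] by (simp add: reflection_mat_involutive[OF c])
  show ?thesis
  proof (subst matrix_eq, intro allI)
    fix x
    have "(?R ** reflection_mat a ** ?R) *v x = ?R *v (reflection_mat a *v (?R *v x))"
      by (simp add: matrix_vector_mul_assoc matrix_mul_assoc)
    also have "\<dots> = x - (2 * mink x ?b / mink a a) *\<^sub>R ?b"
      by (simp add: reflection_mat_apply[of a] adjoint reflection_mat_involutive[OF c]
          matrix_vector_mult_diff_distrib matrix_vector_mult_scaleR)
    also have "\<dots> = reflection_mat ?b *v x"
      by (simp only: reflection_mat_apply[of ?b x] bb)
    finally show "(?R ** reflection_mat a ** ?R) *v x = reflection_mat ?b *v x" .
  qed
qed

lemma det_reflection_mat_conj:
  assumes "mink c c \<noteq> 0"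
  shows "det (reflection_mat (reflection_mat c *v a)) = det (reflection_mat a)"
proof -
  have "det (reflection_mat (reflection_mat c *v a))
      = det (reflection_mat c ** reflection_mat c) * det (reflection_mat a)"
    by (simp add: reflection_mat_conj[OF assms, symmetric] det_mul)
  then show ?thesis by (simp add: reflection_mat_square[OF assms])
qed

lemma reflection_mat_swap:
  assumes "mink a a = mink b b" and "mink (a - b) (a - b) \<noteq> 0"
  shows "reflection_mat (a - b) *v a = b"
proof -
  have "2 * mink a (a - b) = mink (a - b) (a - b)"
    using assms(1) mink_sym[of a b] by (simp add: mink_simps)
  then have "2 * mink a (a - b) / mink (a - b) (a - b) = 1"
    using assms(2) by simp
  then show ?thesis by (simp add: reflection_mat_apply)
qed

lemma det_reflection_mat_axis1: "det (reflection_mat (axis 1 1)) = -1"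
proof -
  have entries: "reflection_mat (axis 1 1) $ i $ j = (if i = j then (if i = 1 then -1 else 1) else 0)"
    for i j
    by (simp add: reflection_mat_def mink_axis, simp add: axis_def)
  have "det (reflection_mat (axis 1 1)) = (\<Prod>i\<in>UNIV. (if i = (1::5) then -1 else 1 :: real))"
    by (subst det_diagonal) (auto simp: entries)
  also have "\<dots> = -1"
    by (subst prod.remove[of _ 1]) auto
  finally show ?thesis .
qed

text \<open>Every reflection in a spacelike vector is conjugate, by a further reflection, to the one in
  a multiple of \<open>e\<^sub>1\<close>: of \<open>a - n\<close> and \<open>a + n\<close>, whose Minkowski squares add up to \<open>4 \<langle>n,n\<rangle>\<close>,
  one is not isotropic.\<close>
lemma det_reflection_mat:
  assumes "mink n n > 0"
  shows "det (reflection_mat n) = -1"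
proof -
  define a where "a = sqrt (mink n n) *\<^sub>R (axis (1::5) (1::real))"
  have aa: "mink a a = mink n n"
    using assms by (simp add: a_def mink_simps mink_axis)
  have det_a: "det (reflection_mat a) = -1"
    using assms by (simp add: a_def reflection_mat_scaleR det_reflection_mat_axis1)
  have "mink (a - n) (a - n) + mink (a - - n) (a - - n) = 4 * mink n n"
    using aa by (simp add: mink_simps mink_sym[of n a])
  then consider "mink (a - n) (a - n) \<noteq> 0" | "mink (a - - n) (a - - n) \<noteq> 0"
    using assms by fastforce
  then show ?thesis
  proof cases
    case 1
    then show ?thesis
      using det_reflection_mat_conj[OF 1, of a] reflection_mat_swap[OF aa 1] det_a by simp
  next
    case 2
    have "mink a a = mink (- n) (- n)" using aa by (simp add: mink_simps mink_sym)
    then have "reflection_mat (reflection_mat (a - - n) *v a) = reflection_mat n"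
      using reflection_mat_swap[OF _ 2] reflection_mat_scaleR[of "-1" n] by simp
    then show ?thesis
      using det_reflection_mat_conj[OF 2, of a] det_a by simp
  qed
qed

section \<open>The hyperboloid\<close>

lemma component_square_le_inner: "(x$i)\<^sup>2 \<le> inner x (x::real^5)"
proof -
  have "\<bar>x$i\<bar>\<^sup>2 \<le> (norm x)\<^sup>2"
    using component_le_norm_cart[of x i] by (intro power_mono) simp_all
  then show ?thesis by (simp add: power2_norm_eq_inner)
qed

text \<open>Both sheets of \<open>\<langle>x,x\<rangle> = -1\<close> have \<open>\<bar>x\<^sub>0\<bar> \<ge> 1\<close>; by Cauchy-Schwarz, points on opposite sheets
  have Minkowski product at least \<open>1\<close>.\<close>
lemma mink_neg_same_sheet:
  assumes xx: "mink x x = -1" and x0: "x$0 > 0" and yy: "mink y y = -1" and xy: "mink x y < 0"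
  shows "y$0 > 0"
proof (rule ccontr)
  assume "\<not> y$0 > 0"
  then have "x$0 * y$0 \<le> 0" using x0 by (simp add: mult_nonneg_nonpos)
  have X: "inner x x = 2 * (x$0)\<^sup>2 - 1" using xx by (simp add: mink_inner power2_eq_square)
  have Y: "inner y y = 2 * (y$0)\<^sup>2 - 1" using yy by (simp add: mink_inner power2_eq_square)
  have x1: "(x$0)\<^sup>2 \<ge> 1" using component_square_le_inner[of x 0] X by simp
  have y1: "(y$0)\<^sup>2 \<ge> 1" using component_square_le_inner[of y 0] Y by simp
  have "0 \<le> - (2 * x$0 * y$0)" and "- (2 * x$0 * y$0) < - inner x y"
    using \<open>x$0 * y$0 \<le> 0\<close> xy by (simp_all add: mink_inner)
  then have "(2 * x$0 * y$0)\<^sup>2 < (inner x y)\<^sup>2"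
    using power_strict_mono[of "- (2 * x$0 * y$0)" "- inner x y" 2] by simp
  also have "\<dots> \<le> inner x x * inner y y" by (rule Cauchy_Schwarz_ineq)
  also have "\<dots> = 4 * (x$0)\<^sup>2 * (y$0)\<^sup>2 - 2 * (x$0)\<^sup>2 - 2 * (y$0)\<^sup>2 + 1"
    by (simp add: X Y algebra_simps power2_eq_square)
  finally show False using x1 y1 by (simp add: power_mult_distrib)
qed

lemma mink_orthogonal_timelike_spacelike:
  assumes pp: "mink p p = -1" and qp: "mink q p = 0" and "q \<noteq> 0"
  shows "mink q q > 0"
proof (rule ccontr)
  assume "\<not> mink q q > 0"
  then have qq: "inner q q \<le> 2 * (q$0)\<^sup>2" by (simp add: mink_inner power2_eq_square)
  have P: "inner p p = 2 * (p$0)\<^sup>2 - 1" using pp by (simp add: mink_inner power2_eq_square)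
  have "(2 * q$0 * p$0)\<^sup>2 \<le> inner q q * inner p p"
    using Cauchy_Schwarz_ineq[of q p] qp by (simp add: mink_inner)
  also have "\<dots> \<le> 2 * (q$0)\<^sup>2 * inner p p"
    using qq by (simp add: mult_right_mono)
  also have "\<dots> = 4 * (q$0)\<^sup>2 * (p$0)\<^sup>2 - 2 * (q$0)\<^sup>2" by (simp add: P algebra_simps)
  finally have "q$0 = 0" by (simp add: power_mult_distrib)
  then have "inner q q \<le> 0" using qq by simp
  then show False using \<open>q \<noteq> 0\<close> by (metis inner_ge_zero inner_eq_zero_iff order_antisym)
qed

text \<open>If a subspace meets \<open>H\<^sup>4\<close> in exactly one point \<open>p\<close>, then it is the line through \<open>p\<close>:
  a component \<open>q\<close> orthogonal to \<open>p\<close> would be spacelike, and \<open>a p + q\<close> with \<open>a = \<surd>(1 + \<langle>q,q\<rangle>)\<close>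
  would be a second point of \<open>H\<^sup>4\<close> in the subspace.\<close>
lemma subspace_subset_span_if_unique_H4_point:
  assumes "subspace S" and p: "p \<in> S \<inter> H4" and uniq: "\<And>x. x \<in> S \<inter> H4 \<Longrightarrow> x = p"
  shows "S \<subseteq> span {p}"
proof
  fix y assume "y \<in> S"
  have pp: "mink p p = -1" and p0: "p$0 > 0" using p by (auto simp: H4_def)
  define q where "q = y + mink y p *\<^sub>R p"
  have "q \<in> S" using \<open>y \<in> S\<close> p \<open>subspace S\<close> by (simp add: q_def subspace_add subspace_scale)
  have qp: "mink q p = 0" using pp by (simp add: q_def mink_simps)
  have "q = 0"
  proof (rule ccontr)
    assume "q \<noteq> 0"
    then have qq: "mink q q > 0" by (rule mink_orthogonal_timelike_spacelike[OF pp qp])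
    define a where "a = sqrt (1 + mink q q)"
    have a2: "a\<^sup>2 = 1 + mink q q" and "a > 0" using qq by (simp_all add: a_def)
    define x where "x = a *\<^sub>R p + q"
    have xx: "mink x x = -1"
      using pp qp a2 by (simp add: x_def mink_simps mink_sym[of p q] power2_eq_square)
    have "mink p x < 0"
      using pp qp \<open>a > 0\<close> by (simp add: x_def mink_simps mink_sym[of p q])
    then have "x$0 > 0" by (rule mink_neg_same_sheet[OF pp p0 xx])
    moreover have "x \<in> S" using \<open>q \<in> S\<close> p \<open>subspace S\<close> by (simp add: x_def subspace_add subspace_scale)
    ultimately have "x = p" using xx uniq by (simp add: H4_def)
    then have "q = (1 - a) *\<^sub>R p" by (simp add: x_def algebra_simps)
    then have "mink q q = (1 - a) * ((1 - a) * mink p p)"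
      by (simp only: mink_scaleR_left mink_scaleR_right)
    then have "mink q q = - (1 - a)\<^sup>2" using pp by (simp add: power2_eq_square algebra_simps)
    then show False using qq by simp
  qed
  then have "y = (- mink y p) *\<^sub>R p" by (simp add: q_def eq_neg_iff_add_eq_0)
  then show "y \<in> span {p}" unfolding span_singleton by (rule range_eqI)
qed

section \<open>Codimension-two subspaces\<close>

definition mink_perp :: "real^5 \<Rightarrow> real^5 \<Rightarrow> (real^5) set" where
  "mink_perp n1 n2 = {x. mink x n1 = 0 \<and> mink x n2 = 0}"

lemma hyperplane_of_Int: "hyperplane_of n1 \<inter> hyperplane_of n2 = H4 \<inter> mink_perp n1 n2"
  by (auto simp: hyperplane_of_def mink_perp_def)

lemma subspace_mink_perp: "subspace (mink_perp n1 n2)"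
  unfolding subspace_def mink_perp_def by (simp add: mink_simps)

lemma dim_mink_perp: "dim (mink_perp n1 n2) \<ge> 3"
proof -
  let ?A = "span {time_flip n1, time_flip n2}"
  let ?O = "{y \<in> UNIV. \<forall>x \<in> ?A. orthogonal x y}"
  have "dim ?O + dim ?A = 5"
    using dim_subspace_orthogonal_to_vectors[of ?A UNIV] by simp
  moreover have "dim ?A \<le> card {time_flip n1, time_flip n2}"
    by (rule dim_le_card) auto
  moreover have "\<dots> \<le> 2" by (simp add: card_insert_le_m1)
  moreover have "?O \<subseteq> mink_perp n1 n2"
    by (auto simp: mink_eq_inner_time_flip orthogonal_def span_base mink_perp_def)
  then have "dim ?O \<le> dim (mink_perp n1 n2)" by (rule dim_subset)
  ultimately show ?thesis by linarith
qed

lemma sums_eq_UNIV_if_dim: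
  fixes V W :: "'a::euclidean_space set"
  assumes "subspace V" "subspace W" and "DIM('a) + dim (V \<inter> W) \<le> dim V + dim W"
  shows "{v + w |v w. v \<in> V \<and> w \<in> W} = UNIV"
proof -
  let ?T = "{v + w |v w. v \<in> V \<and> w \<in> W}"
  have "dim ?T + dim (V \<inter> W) = dim V + dim W" by (rule dim_sums_Int[OF assms(1,2)])
  then have "dim ?T = DIM('a)" using assms(3) dim_subset_UNIV[of ?T] by linarith
  then have "span ?T = UNIV" by (simp only: dim_eq_full)
  moreover have "span ?T = ?T"
    using subspace_sums[OF assms(1,2)] by (rule span_eq_iff[THEN iffD2])
  ultimately show ?thesis by simp
qed

lemma sums_mink_perp_eq_UNIV_if_unique_H4_point:
  assumes "mink_perp n1 n2 \<inter> mink_perp k1 k2 \<inter> H4 = {p}"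
  shows "{v + w |v w. v \<in> mink_perp n1 n2 \<and> w \<in> mink_perp k1 k2} = UNIV"
proof -
  let ?V = "mink_perp n1 n2" and ?W = "mink_perp k1 k2"
  have "?V \<inter> ?W \<subseteq> span {p}"
    by (rule subspace_subset_span_if_unique_H4_point[OF subspace_inter[OF subspace_mink_perp subspace_mink_perp]])
      (use assms in blast)+
  then have "dim (?V \<inter> ?W) \<le> dim {p}"
    using dim_subset[of "?V \<inter> ?W" "span {p}"] by (simp only: dim_span)
  also have "\<dots> \<le> 1"
    using dim_le_card'[of "{p}"] by simp
  finally show ?thesis
    using dim_mink_perp[of n1 n2] dim_mink_perp[of k1 k2]
    by (intro sums_eq_UNIV_if_dim subspace_mink_perp) simp
qed

section \<open>Half-turns\<close>

locale half_turn =
  fixes n1 n2 :: "real^5"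
  assumes n1: "mink n1 n1 > 0" and n2: "mink n2 n2 > 0" and n12: "mink n1 n2 = 0"
begin

abbreviation H :: "real^5^5" where "H \<equiv> reflection_mat n1 ** reflection_mat n2"

lemma H_apply: "H *v x = x - (2 * mink x n1 / mink n1 n1) *\<^sub>R n1 - (2 * mink x n2 / mink n2 n2) *\<^sub>R n2"
  using n12 by (simp add: matrix_vector_mul_assoc[symmetric] reflection_mat_apply mink_simps
      mink_sym[of n2 n1] algebra_simps)

lemma H_mink: "mink (H *v x) (H *v y) = mink x y"
  using n1 n2 by (simp add: matrix_vector_mul_assoc[symmetric] reflection_mat_mink)

lemma H_involutive: "H *v (H *v x) = x"
proof -
  have "mink (H *v x) n1 = - mink x n1" "mink (H *v x) n2 = - mink x n2"
    using n1 n2 n12 by (simp_all add: H_apply mink_simps mink_sym[of n2 n1] field_simps)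
  then show ?thesis by (simp add: H_apply[of "H *v x"]) (simp add: H_apply algebra_simps)
qed

lemma det_H: "det H = 1"
  using det_reflection_mat[OF n1] det_reflection_mat[OF n2] by (simp add: det_mul)

lemma H_displacement_mink_perp: "w \<in> mink_perp n1 n2 \<Longrightarrow> mink (x - H *v x) w = 0"
  by (simp add: H_apply mink_perp_def mink_simps mink_sym[of n1 w] mink_sym[of n2 w])

lemma H_fixed_iff: "H *v x = x \<longleftrightarrow> x \<in> mink_perp n1 n2"
proof
  assume fixed: "H *v x = x"
  have "mink (x - H *v x) n1 = 2 * mink x n1" "mink (x - H *v x) n2 = 2 * mink x n2"
    using n1 n2 n12 by (simp_all add: H_apply mink_simps mink_sym[of n2 n1])
  then show "x \<in> mink_perp n1 n2" using fixed by (simp add: mink_perp_def mink_zero_left)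
qed (simp add: H_apply mink_perp_def)

lemma H_maps_H4: assumes "x \<in> H4" shows "H *v x \<in> H4"
proof -
  have xx: "mink x x = -1" and x0: "x$0 > 0" using assms by (auto simp: H4_def)
  have yy: "mink (H *v x) (H *v x) = -1" using H_mink xx by simp
  have "mink x (H *v x) = -1 - 2 * (mink x n1)\<^sup>2 / mink n1 n1 - 2 * (mink x n2)\<^sup>2 / mink n2 n2"
    using xx by (simp add: H_apply mink_simps power2_eq_square mink_sym[of n1 x] mink_sym[of n2 x])
  also have "\<dots> < 0"
    using n1 n2 by (smt (verit) divide_nonneg_pos zero_le_power2)
  finally have "(H *v x)$0 > 0" by (rule mink_neg_same_sheet[OF xx x0 yy])
  then show ?thesis using yy by (simp add: H4_def)
qed

lemma hyp_isometry_H: "hyp_isometry H"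
proof -
  have "(\<lambda>x. H *v x) ` H4 = H4"
    using H_maps_H4 H_involutive by (metis (no_types, lifting) image_eqI image_subsetI subsetI subset_antisym)
  then show ?thesis by (simp add: hyp_isometry_def H_mink)
qed

end

lemma is_half_turnE:
  assumes "is_half_turn P A"
  obtains n1 n2 where "half_turn n1 n2" and "P = H4 \<inter> mink_perp n1 n2"
    and "A = reflection_mat n1 ** reflection_mat n2"
  using assms unfolding is_half_turn_def hyperplane_of_Int half_turn_def by blast

lemma hyp_isometry_mult:
  assumes "hyp_isometry A" and "hyp_isometry B"
  shows "hyp_isometry (A ** B)"
proof -
  have "(\<lambda>x. (A ** B) *v x) ` H4 = (\<lambda>x. A *v x) ` ((\<lambda>x. B *v x) ` H4)"
    by (simp add: image_image matrix_vector_mul_assoc)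
  then show ?thesis
    using assms by (simp add: hyp_isometry_def flip: matrix_vector_mul_assoc)
qed

lemma half_turn_product_fixed_iff:
  assumes P: "half_turn n1 n2" and Q: "half_turn k1 k2"
    and spanning: "{v + w |v w. v \<in> mink_perp n1 n2 \<and> w \<in> mink_perp k1 k2} = UNIV"
  shows "(half_turn.H n1 n2 ** half_turn.H k1 k2) *v x = x
     \<longleftrightarrow> x \<in> mink_perp n1 n2 \<inter> mink_perp k1 k2"
proof -
  interpret P: half_turn n1 n2 by (fact P)
  interpret Q: half_turn k1 k2 by (fact Q)
  have "P.H ** Q.H *v x = x \<longleftrightarrow> Q.H *v x = P.H *v x"
    using P.H_involutive by (subst matrix_vector_mul_assoc[of P.H Q.H x, symmetric]) metis
  moreover have "P.H *v x = x" if same_image: "Q.H *v x = P.H *v x"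
  proof -
    have "mink (x - P.H *v x) y = 0" for y
    proof -
      obtain v w where "y = v + w" "v \<in> mink_perp n1 n2" "w \<in> mink_perp k1 k2"
        using spanning by blast
      then show ?thesis
        using P.H_displacement_mink_perp Q.H_displacement_mink_perp[of w x] same_image
        by (simp add: mink_add_right)
    qed
    then show ?thesis using mink_nondegenerate by fastforce
  qed
  ultimately show ?thesis using P.H_fixed_iff[of x] Q.H_fixed_iff[of x] by (metis IntE IntI)
qed

theorem lemma6p6:
  assumes "hyp_plane P" and "hyp_plane Q" and "P \<noteq> Q"
    and "\<exists>!x. x \<in> P \<inter> Q"
    and "is_half_turn P A" and "is_half_turn Q B"
  shows "hyp_isometry (A ** B) \<and> elliptic (A ** B) \<and> elliptic_type_II (A ** B)
         \<and> orientation_preserving (A ** B)"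
proof -
  obtain n1 n2 where hP: "half_turn n1 n2" and P: "P = H4 \<inter> mink_perp n1 n2"
    and A: "A = reflection_mat n1 ** reflection_mat n2"
    using assms(5) by (rule is_half_turnE)
  obtain k1 k2 where hQ: "half_turn k1 k2" and Q: "Q = H4 \<inter> mink_perp k1 k2"
    and B: "B = reflection_mat k1 ** reflection_mat k2"
    using assms(6) by (rule is_half_turnE)
  interpret P: half_turn n1 n2 by (fact hP)
  interpret Q: half_turn k1 k2 by (fact hQ)
  obtain p where PQ: "P \<inter> Q = {p}"
    using assms(4) by blast
  then have "{v + w |v w. v \<in> mink_perp n1 n2 \<and> w \<in> mink_perp k1 k2} = UNIV"
    by (intro sums_mink_perp_eq_UNIV_if_unique_H4_point) (simp add: P Q Int_ac)
  then have "(A ** B) *v x = x \<longleftrightarrow> x \<in> mink_perp n1 n2 \<inter> mink_perp k1 k2" for x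
    unfolding A B by (rule half_turn_product_fixed_iff[OF hP hQ])
  then have fixed_points: "x \<in> H4 \<and> (A ** B) *v x = x \<longleftrightarrow> x = p" for x
    using PQ unfolding P Q by blast
  have "hyp_isometry (A ** B)"
    unfolding A B by (intro hyp_isometry_mult P.hyp_isometry_H Q.hyp_isometry_H)
  moreover have "det (A ** B) = 1" using P.det_H Q.det_H by (simp only: A B det_mul mult_1)
  ultimately show ?thesis
    using fixed_points
    by (auto simp: elliptic_type_II_def elliptic_def orientation_preserving_def)
qed

end
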